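(* Let $\sigma=\mathbb{L}(p_1,q_1;\dots;p_r,q_r)\in B_{P_r+Q_r}$ be a Lorenz braid. Index the rows of an $(P_r+Q_r)\times(P_r+Q_r)$ matrix by consecutive blocks of sizes $q_1,\dots,q_r,p_1,\dots,p_r$ (in this order) and its columns by consecutive blocks of sizes $p_1,q_1,p_2,q_2,\dots,p_r,q_r$ (in this order). Then $\beta_{P_r+Q_r}(\sigma)$ is the matrix whose blocks are as follows (with $P_0=0$): <ul> <li>for $1\le i\le r$, in the row block of size $q_i$: the block in column block $p_j$ is $t^{P_{j-1}}A_{q_i,p_j}$ if $j\le i$ and $0$ if $j>i$; the block in column block $q_j$ is $t^{P_i}I_{q_i}$ if $j=i$ and $0$ otherwise;</li> <li>for $1\le i\le r$, in the row block of size $p_i$: the block in column block $p_i$ is $I_{p_i}$, and all other blocks are $0$.</li> </ul> Here $A_{q,p}$ is the $q\times p$ matrix all of whose rows equal $(1-t)(1,t,t^2,\dots,t^{p-1})$. That is, \[ \beta_{P_r+Q_r}(\sigma)=\left(\begin{array}{cc|cc|c|cc} A_{q_1,p_1}&t^{P_1}I_{q_1}&0&0&\cdots&0&0\\ A_{q_2,p_1}&0&t^{P_1}A_{q_2,p_2}&t^{P_2}I_{q_2}&\cdots&0&0\\ \vdots&\vdots&\vdots&\vdots&&\vdots&\vdots\\ A_{q_r,p_1}&0&t^{P_1}A_{q_r,p_2}&0&\cdots&t^{P_{r-1}}A_{q_r,p_r}&t^{P_r}I_{q_r}\\\hline I_{p_1}&0&0&0&\cdots&0&0\\ 0&0&I_{p_2}&0&\cdots&0&0\\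 \vdots&\vdots&\vdots&\vdots&&\vdots&\vdots\\ 0&0&0&0&\cdots&I_{p_r}&0 \end{array}\right). \]
   Context: Braid group $B_n$: generators $\sigma_1,\dots,\sigma_{n-1}$ with the usual braid relations; $\sigma_i$ is the diagram in which the strand from the $i$-th top point to the $(i+1)$-th bottom point passes over the strand from the $(i+1)$-th top point to the $i$-th bottom point, and products correspond to stacking diagrams, the first factor on top. The Burau representation $\beta_n:B_n\to\mathrm{GL}_n(\mathbb{Z}[t,t^{-1}])$ is the homomorphism with $\beta_n(\sigma_j)=I_{j-1}\oplus\begin{pmatrix}1-t&t\\1&0\end{pmatrix}\oplus I_{n-j-1}$. Lorenz braid: given $r\ge1$ and positive integers $p_1,q_1,\dots,p_r,q_r$, set $P_j=p_1+\cdots+p_j$, $Q_j=q_1+\cdots+q_j$. $\mathbb{L}(p_1,q_1;\dots;p_r,q_r)$ is the braid on $P_r+Q_r$ strands defined by: the top row is split into a left part of $Q_r$ points and a right part of $P_r$ points; the bottom row is split, from left to right, into consecutive parts of sizes $p_1,q_1,p_2,q_2,\dots,p_r,q_r$ ($p$-parts and $q$-parts); the strands from the left top part are joined, in order, to the points of the $q$-parts, and the strands from the right top part are joined, in order, to the points of the $p$-parts (straight segments); at each crossing the strand from the left top part passes over the strand from the right top part, so the braid is positive. *)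

theory Defs
  imports "Jordan_Normal_Form.Matrix" "HOL-Computational_Algebra.Polynomial"
begin

text \<open>The variable t of the Burau representation.  All braids considered are
positive, so their Burau matrices have entries in Z[t], a subring of Z[t,t^-1];
we compute in int poly.\<close>
definition tt :: "int poly" where "tt = monom 1 1"

text \<open>Burau matrix of the generator sigma_j (j is 1-indexed, 1 <= j <= n-1);
matrix entries are 0-indexed as in Jordan_Normal_Form.\<close>
definition burau_gen :: "nat \<Rightarrow> nat \<Rightarrow> int poly mat" where
  "burau_gen n j = mat n n (\<lambda>(a,b).
     if a = j - 1 \<and> b = j - 1 then 1 - tt
     else if a = j - 1 \<and> b = j then tt
     else if a = j \<and> b = j - 1 then 1
     else if a = j \<and> b = j then 0
     else if a = b then 1 else 0)"

text \<open>Burau matrix of the positive braid word sigma_{j1} ... sigma_{jm}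
(first factor on top = leftmost factor).\<close>
definition burau_word :: "nat \<Rightarrow> nat list \<Rightarrow> int poly mat" where
  "burau_word n w = foldl (\<lambda>M j. M * burau_gen n j) (1\<^sub>m n) w"

definition swp :: "nat \<Rightarrow> nat \<Rightarrow> nat" where
  "swp j k = (if k = j then j + 1 else if k = j + 1 then j else k)"

text \<open>Bottom position of the strand starting at top position k.\<close>
definition word_perm :: "nat list \<Rightarrow> nat \<Rightarrow> nat" where
  "word_perm w k = foldl (\<lambda>x j. swp j x) k w"

definition psum :: "(nat \<Rightarrow> nat) \<Rightarrow> nat \<Rightarrow> nat" where
  "psum p j = (\<Sum>i = 1..j. p i)"

text \<open>Permutation underlying the Lorenz braid L(p_1,q_1;...;p_r,q_r):
top point k (1-indexed) is joined to bottom point lorenz_perm p q r k.\<close>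
definition lorenz_perm :: "(nat \<Rightarrow> nat) \<Rightarrow> (nat \<Rightarrow> nat) \<Rightarrow> nat \<Rightarrow> nat \<Rightarrow> nat" where
  "lorenz_perm p q r k =
     (if k \<le> psum q r then
        (let i = (LEAST i. k \<le> psum q i) in psum p i + k)
      else
        (let m = k - psum q r; i = (LEAST i. m \<le> psum p i) in psum q (i - 1) + m))"

text \<open>w is a positive braid word representing the Lorenz braid: a positive word
whose underlying permutation is the Lorenz permutation and in which every pair of
strands crosses at most once (length = number of inversions).  Since at each
crossing the strand moving right (coming from the left top part) is over, this is
exactly the positive permutation braid drawn in the definition.\<close>
definition is_lorenz_word :: "(nat \<Rightarrow> nat) \<Rightarrow> (nat \<Rightarrow> nat) \<Rightarrow> nat \<Rightarrow> nat list \<Rightarrow> bool" where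
  "is_lorenz_word p q r w \<longleftrightarrow>
     (let n = psum p r + psum q r in
       (\<forall>j\<in>set w. 1 \<le> j \<and> j < n) \<and>
       (\<forall>k\<in>{1..n}. word_perm w k = lorenz_perm p q r k) \<and>
       length w = card {(a, b). a \<in> {1..n} \<and> b \<in> {1..n} \<and> a < b \<and>
                                 lorenz_perm p q r b < lorenz_perm p q r a})"

end

theory Submission
  imports Defs
begin

text \<open>A positive braid word whose length is the number of inversions of its permutation is the
  positive permutation braid of that permutation, and the Burau matrix of such a braid is given
  by an explicit formula in the permutation; this is proved by induction on the word, one
  generator at a time. In the Lorenz braid the strands of each top part keep their
  order and every crossing is a left strand passing over a right strand, so the exponents of t
  in that formula are partial sums of the p_i, which gives the stated block structure.\<close>

lemma swp_swp [simp]: "swp j (swp j k) = k"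
  by (simp add: swp_def)

lemma swp_less_swp_iff:
  "\<not> (u = j \<and> v = Suc j) \<Longrightarrow> \<not> (u = Suc j \<and> v = j) \<Longrightarrow> swp j u < swp j v \<longleftrightarrow> u < v"
  by (auto simp: swp_def)

lemma inj_swp: "inj (swp j)"
  by (metis injI swp_swp)

lemma bij_betw_swp: "1 \<le> j \<Longrightarrow> j < n \<Longrightarrow> bij_betw (swp j) {1..n} {1..n}"
  by (rule bij_betw_byWitness[where f' = "swp j"]) (auto simp: swp_def)

lemma word_perm_Nil: "word_perm [] = id"
  by (simp add: word_perm_def fun_eq_iff)

lemma word_perm_snoc: "word_perm (w @ [j]) = swp j \<circ> word_perm w"
  by (simp add: word_perm_def fun_eq_iff)

lemma bij_betw_word_perm:
  "\<forall>j\<in>set w. 1 \<le> j \<and> j < n \<Longrightarrow> bij_betw (word_perm w) {1..n} {1..n}"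
proof (induction w rule: rev_induct)
  case Nil
  then show ?case by (simp add: word_perm_def bij_betw_def)
next
  case (snoc j w)
  then have "bij_betw (swp j \<circ> word_perm w) {1..n} {1..n}"
    by (intro bij_betw_trans[of _ _ "{1..n}"] bij_betw_swp) auto
  then show ?case
    unfolding word_perm_snoc .
qed

lemma burau_word_snoc: "burau_word n (w @ [j]) = burau_word n w * burau_gen n j"
  by (simp add: burau_word_def)

lemma mult_burau_gen_index:
  assumes M: "M \<in> carrier_mat n n" and x: "x < n" and y: "y < n" and j: "1 \<le> j" "j < n"
  shows "(M * burau_gen n j) $$ (x, y) =
    (if y = j - 1 then (1 - tt) * M $$ (x, j - 1) + M $$ (x, j)
     else if y = j then tt * M $$ (x, j - 1) else M $$ (x, y))"
proof -
  have "(M * burau_gen n j) $$ (x, y) = (\<Sum>k<n. M $$ (x, k) * burau_gen n j $$ (k, y))"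
    using M x y by (simp add: scalar_prod_def burau_gen_def atLeast0LessThan)
  also have "\<dots> = (\<Sum>k<n. (if k = j - 1 then M $$ (x, j - 1) * burau_gen n j $$ (j - 1, y) else 0)
                      + (if k = j then M $$ (x, j) * burau_gen n j $$ (j, y) else 0)
                      + (if k = y \<and> y \<noteq> j - 1 \<and> y \<noteq> j then M $$ (x, y) else 0))"
    using j y by (intro sum.cong) (auto simp: burau_gen_def)
  also have "\<dots> = M $$ (x, j - 1) * burau_gen n j $$ (j - 1, y) + M $$ (x, j) * burau_gen n j $$ (j, y)
                  + (if y \<noteq> j - 1 \<and> y \<noteq> j then M $$ (x, y) else 0)"
    using j y by (simp add: sum.distrib)
  finally show ?thesis
    using j y by (auto simp: burau_gen_def algebra_simps)
qed

definition right_below :: "nat \<Rightarrow> (nat \<Rightarrow> nat) \<Rightarrow> nat \<Rightarrow> nat \<Rightarrow> nat" where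
  "right_below n \<pi> a b = card {m \<in> {1..n}. a < m \<and> \<pi> m < b}"

text \<open>Burau matrix of the positive permutation braid of \<pi> on strands 1..n, in which two
  strands cross at most once and the strand moving right passes over: strand a contributes
  t^k at its own endpoint \<pi> a and (1 - t) t^k at the endpoint b of every strand starting to
  its right that it crosses, where k is the number of strands starting right of a and ending
  left of b.\<close>
definition perm_burau_entry :: "nat \<Rightarrow> (nat \<Rightarrow> nat) \<Rightarrow> nat \<Rightarrow> nat \<Rightarrow> int poly" where
  "perm_burau_entry n \<pi> a b =
     (if \<pi> a = b then tt ^ right_below n \<pi> a b
      else if \<exists>m\<in>{1..n}. a < m \<and> \<pi> m = b \<and> b < \<pi> a then (1 - tt) * tt ^ right_below n \<pi> a b
      else 0)"

definition perm_burau :: "nat \<Rightarrow> (nat \<Rightarrow> nat) \<Rightarrow> int poly mat" where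
  "perm_burau n \<pi> = mat n n (\<lambda>(x, y). perm_burau_entry n \<pi> (x + 1) (y + 1))"

definition inversions :: "nat \<Rightarrow> (nat \<Rightarrow> nat) \<Rightarrow> (nat \<times> nat) set" where
  "inversions n \<pi> = {(a, b). a \<in> {1..n} \<and> b \<in> {1..n} \<and> a < b \<and> \<pi> b < \<pi> a}"

lemma perm_burau_carrier: "perm_burau n \<pi> \<in> carrier_mat n n"
  by (simp add: perm_burau_def)

lemma perm_burau_index:
  "a \<in> {1..n} \<Longrightarrow> b \<in> {1..n} \<Longrightarrow> perm_burau n \<pi> $$ (a - 1, b - 1) = perm_burau_entry n \<pi> a b"
  by (cases a; cases b) (simp_all add: perm_burau_def)

lemma perm_burau_cong:
  assumes "\<And>k. k \<in> {1..n} \<Longrightarrow> \<pi> k = \<pi>' k"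
  shows "perm_burau n \<pi> = perm_burau n \<pi>'"
proof -
  have "right_below n \<pi> a b = right_below n \<pi>' a b" for a b
    using assms unfolding right_below_def by (metis (lifting))
  then show ?thesis
    using assms by (intro eq_matI) (auto simp: perm_burau_def perm_burau_entry_def)
qed

lemma inversions_cong:
  "(\<And>k. k \<in> {1..n} \<Longrightarrow> \<pi> k = \<pi>' k) \<Longrightarrow> inversions n \<pi> = inversions n \<pi>'"
  by (auto simp: inversions_def)

lemma perm_burau_id: "perm_burau n id = 1\<^sub>m n"
proof -
  have "right_below n id a a = 0" for a
    by (simp add: right_below_def)
  then show ?thesis
    by (auto simp: perm_burau_def perm_burau_entry_def)
qed

lemma perm_burau_entry_preimage:
  assumes "inj_on \<pi> {1..n}" "a \<in> {1..n}" "B \<in> {1..n}"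
  shows "perm_burau_entry n \<pi> a (\<pi> B) =
    (if a = B then tt ^ right_below n \<pi> a (\<pi> B)
     else if a < B \<and> \<pi> B < \<pi> a then (1 - tt) * tt ^ right_below n \<pi> a (\<pi> B)
     else 0)"
  using assms unfolding perm_burau_entry_def by (auto simp: inj_on_eq_iff)

lemma right_below_swp_other:
  "b \<noteq> j \<Longrightarrow> b \<noteq> Suc j \<Longrightarrow> right_below n (swp j \<circ> \<pi>) a b = right_below n \<pi> a b"
proof -
  assume "b \<noteq> j" "b \<noteq> Suc j"
  then have "swp j k < b \<longleftrightarrow> k < b" for k
    by (auto simp: swp_def)
  then show ?thesis
    by (simp add: right_below_def)
qed

lemma right_below_swp_self: "right_below n (swp j \<circ> \<pi>) a j = right_below n \<pi> a j"
proof -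
  have "swp j k < j \<longleftrightarrow> k < j" for k
    by (auto simp: swp_def)
  then show ?thesis
    by (simp add: right_below_def)
qed

lemma right_below_Suc:
  assumes "inj_on \<pi> {1..n}" "A \<in> {1..n}" "\<pi> A = j"
  shows "right_below n \<pi> a (Suc j) = right_below n \<pi> a j + (if a < A then 1 else 0)"
proof -
  have "{m \<in> {1..n}. a < m \<and> \<pi> m < Suc j} =
        {m \<in> {1..n}. a < m \<and> \<pi> m < j} \<union> (if a < A then {A} else {})"
    using assms by (auto simp: less_Suc_eq inj_on_eq_iff)
  then show ?thesis
    using assms by (simp add: right_below_def)
qed

lemma perm_burau_entry_swp_other:
  assumes "b \<noteq> j" "b \<noteq> Suc j"
  shows "perm_burau_entry n (swp j \<circ> \<pi>) a b = perm_burau_entry n \<pi> a b"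
proof -
  have "swp j k = b \<longleftrightarrow> k = b" "b < swp j k \<longleftrightarrow> b < k" for k
    using assms by (auto simp: swp_def)
  then show ?thesis
    using right_below_swp_other[OF assms] by (auto simp: perm_burau_entry_def)
qed

context
  fixes n :: nat and \<pi> :: "nat \<Rightarrow> nat" and j A B :: nat
  assumes inj: "inj_on \<pi> {1..n}"
    and A: "A \<in> {1..n}" "\<pi> A = j" and B: "B \<in> {1..n}" "\<pi> B = Suc j"
begin

lemma inj_on_swp_comp: "inj_on (swp j \<circ> \<pi>) {1..n}"
  using comp_inj_on[OF inj inj_on_subset[OF inj_swp subset_UNIV]] .

lemma swp_comp_A: "(swp j \<circ> \<pi>) A = Suc j" and swp_comp_B: "(swp j \<circ> \<pi>) B = j"
  using A B by (simp_all add: swp_def)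

lemma swp_comp_other:
  assumes "a \<in> {1..n}" "a \<noteq> A" "a \<noteq> B"
  shows "(swp j \<circ> \<pi>) a = \<pi> a"
proof -
  have "\<pi> a \<noteq> \<pi> A" "\<pi> a \<noteq> \<pi> B"
    using assms inj A(1) B(1) by (simp_all add: inj_on_eq_iff)
  then show ?thesis
    using A B by (simp add: swp_def)
qed

text \<open>With A < B the generator adds a new crossing, strand A passing over strand B.\<close>
context
  assumes A_less_B: "A < B"
begin

lemma perm_burau_entry_swp_Suc:
  assumes a: "a \<in> {1..n}"
  shows "perm_burau_entry n (swp j \<circ> \<pi>) a (Suc j) = tt * perm_burau_entry n \<pi> a j"
proof -
  let ?c = "right_below n \<pi> a j"
  have c: "right_below n (swp j \<circ> \<pi>) a (Suc j) = ?c + (if a < B then 1 else 0)"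
    unfolding right_below_Suc[OF inj_on_swp_comp B(1) swp_comp_B] right_below_swp_self ..
  have lhs: "perm_burau_entry n (swp j \<circ> \<pi>) a (Suc j) =
    (if a = A then tt ^ (?c + (if a < B then 1 else 0))
     else if a < A \<and> Suc j < (swp j \<circ> \<pi>) a then (1 - tt) * tt ^ (?c + (if a < B then 1 else 0))
     else 0)"
    using perm_burau_entry_preimage[OF inj_on_swp_comp a A(1)] by (simp only: swp_comp_A c)
  have rhs: "perm_burau_entry n \<pi> a j =
    (if a = A then tt ^ ?c else if a < A \<and> j < \<pi> a then (1 - tt) * tt ^ ?c else 0)"
    using perm_burau_entry_preimage[OF inj a A(1)] by (simp only: A(2))
  show ?thesis
  proof (cases "a < A")
    case True
    then have "a \<noteq> B"
      using A_less_B by simp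
    then have "(swp j \<circ> \<pi>) a = \<pi> a" "\<pi> a \<noteq> Suc j"
      using True swp_comp_other[OF a] inj_on_eq_iff[OF inj a B(1)] B(2) by auto
    then show ?thesis
      using lhs rhs True A_less_B by simp
  next
    case False
    then show ?thesis
      using lhs rhs A_less_B by auto
  qed
qed

lemma perm_burau_entry_swp_self:
  assumes a: "a \<in> {1..n}"
  shows "perm_burau_entry n (swp j \<circ> \<pi>) a j =
    (1 - tt) * perm_burau_entry n \<pi> a j + perm_burau_entry n \<pi> a (Suc j)"
proof -
  let ?c = "right_below n \<pi> a j"
  have lhs: "perm_burau_entry n (swp j \<circ> \<pi>) a j =
    (if a = B then tt ^ ?c else if a < B \<and> j < (swp j \<circ> \<pi>) a then (1 - tt) * tt ^ ?c else 0)"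
    using perm_burau_entry_preimage[OF inj_on_swp_comp a B(1)]
    by (simp only: swp_comp_B right_below_swp_self)
  have rhs1: "perm_burau_entry n \<pi> a j =
    (if a = A then tt ^ ?c else if a < A \<and> j < \<pi> a then (1 - tt) * tt ^ ?c else 0)"
    using perm_burau_entry_preimage[OF inj a A(1)] by (simp only: A(2))
  have rhs2: "perm_burau_entry n \<pi> a (Suc j) =
    (if a = B then tt ^ (?c + (if a < A then 1 else 0))
     else if a < B \<and> Suc j < \<pi> a then (1 - tt) * tt ^ (?c + (if a < A then 1 else 0)) else 0)"
    using perm_burau_entry_preimage[OF inj a B(1)] by (simp only: B(2) right_below_Suc[OF inj A])
  consider "a = A" | "a = B" | "a \<noteq> A" "a \<noteq> B"
    by blast
  then show ?thesis
  proof cases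
    case 1
    then show ?thesis
      using lhs rhs1 rhs2 A_less_B A(2) swp_comp_A by simp
  next
    case 2
    then show ?thesis
      using lhs rhs1 rhs2 A_less_B by simp
  next
    case 3
    then have "(swp j \<circ> \<pi>) a = \<pi> a" "\<pi> a \<noteq> Suc j"
      using swp_comp_other[OF a] inj_on_eq_iff[OF inj a B(1)] B(2) by auto
    then show ?thesis
      using lhs rhs1 rhs2 3 A_less_B by (auto simp: algebra_simps)
  qed
qed

lemma perm_burau_mult_burau_gen:
  assumes j: "1 \<le> j" "j < n"
  shows "perm_burau n \<pi> * burau_gen n j = perm_burau n (swp j \<circ> \<pi>)"
proof (rule eq_matI)
  fix x y
  assume "x < dim_row (perm_burau n (swp j \<circ> \<pi>))" "y < dim_col (perm_burau n (swp j \<circ> \<pi>))"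
  then have x: "x < n" and y: "y < n"
    by (simp_all add: perm_burau_def)
  have a: "Suc x \<in> {1..n}"
    using x by simp
  have "j - 1 < n" "Suc (j - 1) = j"
    using j by simp_all
  then show "(perm_burau n \<pi> * burau_gen n j) $$ (x, y) = perm_burau n (swp j \<circ> \<pi>) $$ (x, y)"
    using mult_burau_gen_index[OF perm_burau_carrier x y j] j x y
      perm_burau_entry_swp_self[OF a] perm_burau_entry_swp_Suc[OF a]
      perm_burau_entry_swp_other[of "Suc y" j n \<pi> "Suc x"]
    by (auto simp: perm_burau_def)
qed (simp_all add: perm_burau_def burau_gen_def)

end

lemma inversions_swp:
  "inversions n (swp j \<circ> \<pi>) =
    (if A < B then insert (A, B) (inversions n \<pi>) else inversions n \<pi> - {(B, A)})"
proof -
  have swp_less: "swp j (\<pi> b) < swp j (\<pi> a) \<longleftrightarrow> \<pi> b < \<pi> a"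
    if "a \<in> {1..n}" "b \<in> {1..n}" "\<not> (b = A \<and> a = B)" "\<not> (b = B \<and> a = A)" for a b
  proof (rule swp_less_swp_iff)
    show "\<not> (\<pi> b = j \<and> \<pi> a = Suc j)"
      using that(3) inj_on_eq_iff[OF inj that(2) A(1)] inj_on_eq_iff[OF inj that(1) B(1)] A(2) B(2)
      by simp
    show "\<not> (\<pi> b = Suc j \<and> \<pi> a = j)"
      using that(4) inj_on_eq_iff[OF inj that(2) B(1)] inj_on_eq_iff[OF inj that(1) A(1)] A(2) B(2)
      by simp
  qed
  show ?thesis
  proof (rule Set.set_eqI)
    fix z :: "nat \<times> nat"
    obtain a b where z: "z = (a, b)"
      by fastforce
    consider "a = A" "b = B" | "a = B" "b = A" | "\<not> (b = A \<and> a = B)" "\<not> (b = B \<and> a = A)"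
      by blast
    then show "z \<in> inversions n (swp j \<circ> \<pi>) \<longleftrightarrow>
      z \<in> (if A < B then insert (A, B) (inversions n \<pi>) else inversions n \<pi> - {(B, A)})"
    proof cases
      case 1
      then show ?thesis
        using z A B by (simp add: inversions_def swp_def)
    next
      case 2
      then show ?thesis
        using z A B by (simp add: inversions_def swp_def)
    next
      case 3
      then show ?thesis
        using z swp_less[of a b] by (auto simp: inversions_def)
    qed
  qed
qed

lemma card_inversions_swp:
  "card (inversions n (swp j \<circ> \<pi>)) =
    (if A < B then Suc (card (inversions n \<pi>)) else card (inversions n \<pi>) - 1)"
proof -
  have fin: "finite (inversions n \<pi>)"
    by (rule finite_subset[of _ "{1..n} \<times> {1..n}"]) (auto simp: inversions_def)
  show ?thesis
  proof (cases "A < B")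
    case True
    then have "(A, B) \<notin> inversions n \<pi>"
      using A B by (simp add: inversions_def)
    then show ?thesis
      using True fin by (simp add: inversions_swp)
  next
    case False
    then have "B < A"
      using A B by (cases "A = B") auto
    then have "(B, A) \<in> inversions n \<pi>"
      using A B by (simp add: inversions_def)
    then show ?thesis
      using False fin by (simp add: inversions_swp card_Diff_singleton)
  qed
qed

end

lemma word_perm_preimages:
  assumes "\<forall>i\<in>set w. 1 \<le> i \<and> i < n" "1 \<le> j" "j < n"
  obtains A B where "A \<in> {1..n}" "word_perm w A = j" "B \<in> {1..n}" "word_perm w B = Suc j"
proof -
  have "word_perm w ` {1..n} = {1..n}"
    using bij_betw_word_perm[OF assms(1)] by (simp add: bij_betw_def)
  moreover have "j \<in> {1..n}" "Suc j \<in> {1..n}"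
    using assms(2,3) by simp_all
  ultimately show ?thesis
    using that by (metis imageE)
qed

lemma inversions_id: "inversions n id = {}"
  by (auto simp: inversions_def)

lemma card_inversions_word_perm_le:
  "\<forall>j\<in>set w. 1 \<le> j \<and> j < n \<Longrightarrow> card (inversions n (word_perm w)) \<le> length w"
proof (induction w rule: rev_induct)
  case Nil
  show ?case
    unfolding word_perm_Nil inversions_id by simp
next
  case (snoc j w)
  then have w: "\<forall>i\<in>set w. 1 \<le> i \<and> i < n" and j: "1 \<le> j" "j < n"
    by simp_all
  have inj: "inj_on (word_perm w) {1..n}"
    using bij_betw_imp_inj_on[OF bij_betw_word_perm[OF w]] .
  obtain A B where A: "A \<in> {1..n}" "word_perm w A = j" and B: "B \<in> {1..n}" "word_perm w B = Suc j"
    using word_perm_preimages[OF w j] .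
  have "card (inversions n (swp j \<circ> word_perm w)) \<le> Suc (card (inversions n (word_perm w)))"
    using card_inversions_swp[OF inj A B] by (cases "A < B") simp_all
  then show ?case
    unfolding word_perm_snoc length_append_singleton using snoc.IH[OF w] by linarith
qed

text \<open>The length hypothesis says that the word is reduced: no two strands cross twice.\<close>
theorem burau_word_eq_perm_burau:
  assumes "\<forall>j\<in>set w. 1 \<le> j \<and> j < n" "length w = card (inversions n (word_perm w))"
  shows "burau_word n w = perm_burau n (word_perm w)"
  using assms
proof (induction w rule: rev_induct)
  case Nil
  show ?case
    unfolding word_perm_Nil perm_burau_id by (simp add: burau_word_def)
next
  case (snoc j w)
  then have w: "\<forall>i\<in>set w. 1 \<le> i \<and> i < n" and j: "1 \<le> j" "j < n"
    by simp_all
  have inj: "inj_on (word_perm w) {1..n}"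
    using bij_betw_imp_inj_on[OF bij_betw_word_perm[OF w]] .
  obtain A B where A: "A \<in> {1..n}" "word_perm w A = j" and B: "B \<in> {1..n}" "word_perm w B = Suc j"
    using word_perm_preimages[OF w j] .
  have card_snoc: "Suc (length w) = card (inversions n (swp j \<circ> word_perm w))"
    using snoc.prems(2) unfolding word_perm_snoc length_append_singleton .
  have "A < B"
  proof (rule ccontr)
    assume "\<not> A < B"
    then have "card (inversions n (swp j \<circ> word_perm w)) \<le> card (inversions n (word_perm w))"
      using card_inversions_swp[OF inj A B] by simp
    then show False
      using card_snoc card_inversions_word_perm_le[OF w] by simp
  qed
  then have "length w = card (inversions n (word_perm w))"
    using card_snoc card_inversions_swp[OF inj A B] by simp
  then have "burau_word n (w @ [j]) = perm_burau n (word_perm w) * burau_gen n j"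
    using snoc.IH w by (simp add: burau_word_snoc)
  also have "\<dots> = perm_burau n (swp j \<circ> word_perm w)"
    using perm_burau_mult_burau_gen[OF inj A B \<open>A < B\<close> j] .
  finally show ?case
    unfolding word_perm_snoc .
qed

lemma psum_mono: "i \<le> i' \<Longrightarrow> psum p i \<le> psum p i'"
  unfolding psum_def by (rule sum_mono2) auto

lemma psum_pred_add: "1 \<le> i \<Longrightarrow> psum p (i - 1) + p i = psum p i"
  by (cases i) (simp_all add: psum_def)

lemma psum_block_mem: "i \<in> {1..r} \<Longrightarrow> u \<in> {1..p i} \<Longrightarrow> psum p (i - 1) + u \<in> {1..psum p r}"
  using psum_pred_add[of i p] psum_mono[of i r p] by auto

lemma psum_block_less:
  assumes "1 \<le> i" "i < j" "u \<le> p i" "1 \<le> v"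
  shows "psum p (i - 1) + u < psum p (j - 1) + v"
proof -
  have "psum p (i - 1) + u \<le> psum p i"
    using assms psum_pred_add[of i p] by simp
  also have "\<dots> \<le> psum p (j - 1)"
    using assms by (intro psum_mono) simp
  finally show ?thesis
    using assms by simp
qed

lemma psum_block_inj:
  assumes "1 \<le> i" "1 \<le> j" "u \<in> {1..p i}" "v \<in> {1..p j}"
    and "psum p (i - 1) + u = psum p (j - 1) + v"
  shows "i = j \<and> u = v"
  using assms psum_block_less[of i j u p v] psum_block_less[of j i v p u]
  by (cases i j rule: linorder_cases) auto

lemma Least_psum_eq:
  assumes "1 \<le> i" "psum p (i - 1) < k" "k \<le> psum p i"
  shows "(LEAST i'. k \<le> psum p i') = i"
proof (rule Least_equality)
  show "k \<le> psum p i"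
    by fact
  show "i \<le> i'" if "k \<le> psum p i'" for i'
  proof (rule ccontr)
    assume "\<not> i \<le> i'"
    then have "psum p i' \<le> psum p (i - 1)"
      by (intro psum_mono) simp
    then show False
      using that assms(2) by simp
  qed
qed

lemma lorenz_perm_left:
  assumes "i \<in> {1..r}" "u \<in> {1..q i}"
  shows "lorenz_perm p q r (psum q (i - 1) + u) = psum p i + psum q (i - 1) + u"
proof -
  have "psum q (i - 1) + u \<le> psum q r"
    using psum_block_mem[where p = q, OF assms] by simp
  moreover have "(LEAST i'. psum q (i - 1) + u \<le> psum q i') = i"
    using assms psum_pred_add[of i q] by (intro Least_psum_eq) auto
  ultimately show ?thesis
    by (simp add: lorenz_perm_def)
qed

lemma lorenz_perm_right:
  assumes "i \<in> {1..r}" "u \<in> {1..p i}"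
  shows "lorenz_perm p q r (psum q r + psum p (i - 1) + u) = psum p (i - 1) + psum q (i - 1) + u"
proof -
  have "(LEAST i'. psum p (i - 1) + u \<le> psum p i') = i"
    using assms psum_pred_add[of i p] by (intro Least_psum_eq) auto
  then show ?thesis
    using assms by (simp add: lorenz_perm_def)
qed

lemma strict_mono_on_lorenz_perm_left: "strict_mono_on {1..psum q r} (lorenz_perm p q r)"
proof (rule strict_mono_onI)
  fix a b
  assume a: "a \<in> {1..psum q r}" and b: "b \<in> {1..psum q r}" and "a < b"
  have "b \<le> psum q (LEAST i. b \<le> psum q i)"
    by (rule LeastI[of _ r]) (use b in simp)
  then have "(LEAST i. a \<le> psum q i) \<le> (LEAST i. b \<le> psum q i)"
    using \<open>a < b\<close> by (intro Least_le) simp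
  then have "psum p (LEAST i. a \<le> psum q i) \<le> psum p (LEAST i. b \<le> psum q i)"
    by (rule psum_mono)
  then show "lorenz_perm p q r a < lorenz_perm p q r b"
    using a b \<open>a < b\<close> by (simp add: lorenz_perm_def)
qed

lemma strict_mono_on_lorenz_perm_right:
  "strict_mono_on {psum q r<..psum p r + psum q r} (lorenz_perm p q r)"
proof (rule strict_mono_onI)
  fix a b
  assume a: "a \<in> {psum q r<..psum p r + psum q r}" and b: "b \<in> {psum q r<..psum p r + psum q r}"
    and "a < b"
  let ?i = "\<lambda>k. LEAST i. k - psum q r \<le> psum p i"
  have "b - psum q r \<le> psum p (?i b)"
    by (rule LeastI[of _ r]) (use b in auto)
  then have "?i a \<le> ?i b"
    using \<open>a < b\<close> by (intro Least_le) simp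
  then have "psum q (?i a - 1) \<le> psum q (?i b - 1)"
    by (intro psum_mono) simp
  then show "lorenz_perm p q r a < lorenz_perm p q r b"
    using a b \<open>a < b\<close> by (simp add: lorenz_perm_def) arith
qed

text \<open>Injectivity holds for every Lorenz permutation; in the theorem it is simply inherited
  from the braid word.\<close>
locale lorenz_braid =
  fixes p q :: "nat \<Rightarrow> nat" and r n :: nat
  assumes p_pos: "\<And>i. i \<in> {1..r} \<Longrightarrow> 0 < p i"
    and n_eq: "n = psum p r + psum q r"
    and inj: "inj_on (lorenz_perm p q r) {1..n}"
begin

abbreviation \<pi> :: "nat \<Rightarrow> nat" where
  "\<pi> \<equiv> lorenz_perm p q r"

lemma strict_mono_on_right: "strict_mono_on {psum q r<..n} \<pi>"
  using strict_mono_on_lorenz_perm_right by (simp add: n_eq)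

lemma right_strands_below_right_strand:
  "m \<in> {psum q r<..n} \<Longrightarrow> {k \<in> {psum q r<..n}. \<pi> k < \<pi> m} = {psum q r<..<m}"
  using strict_mono_on_less[OF strict_mono_on_right] by auto

lemma right_below_left_strand:
  assumes a: "a \<in> {1..psum q r}" and "b \<le> \<pi> a"
  shows "right_below n \<pi> a b = card {k \<in> {psum q r<..n}. \<pi> k < b}"
proof -
  have "\<pi> a < \<pi> k" if "a < k" "k \<in> {1..psum q r}" for k
    using strict_mono_onD[OF strict_mono_on_lorenz_perm_left[where p = p] a that(2) that(1)] .
  then have "{k \<in> {1..n}. a < k \<and> \<pi> k < b} = {k \<in> {psum q r<..n}. \<pi> k < b}"
    using a \<open>b \<le> \<pi> a\<close> by fastforce
  then show ?thesis
    by (simp add: right_below_def)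
qed

lemma right_strands_below_left_strand:
  assumes i: "i \<in> {1..r}" "u \<in> {1..q i}"
  shows "{k \<in> {psum q r<..n}. \<pi> k < \<pi> (psum q (i - 1) + u)} = {psum q r<..psum q r + psum p i}"
proof -
  have "1 \<le> p i"
    using p_pos[OF i(1)] by simp
  then have last_before: "\<pi> (psum q r + psum p i) = psum p i + psum q (i - 1)"
    using lorenz_perm_right[of i r "p i" p q] i(1) psum_pred_add[of i p]
    by (simp add: add.assoc)
  have before: "\<pi> k < \<pi> (psum q (i - 1) + u)" if "k \<in> {psum q r<..psum q r + psum p i}" for k
  proof -
    have "psum p i \<le> psum p r"
      using i by (simp add: psum_mono)
    then have "\<pi> k \<le> \<pi> (psum q r + psum p i)"
      using that i by (intro strict_mono_on_leD[OF strict_mono_on_right]) (auto simp: n_eq)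
    then show ?thesis
      using last_before lorenz_perm_left[where q = q, OF i] i by simp
  qed
  have after: "\<pi> (psum q (i - 1) + u) < \<pi> k" if "k \<in> {psum q r + psum p i<..n}" for k
  proof -
    have "i < r"
      using that psum_mono[of r i p] by (cases "i < r") (auto simp: n_eq)
    then have i1: "i + 1 \<in> {1..r}" "1 \<in> {1..p (i + 1)}"
      using p_pos[of "i + 1"] by auto
    have "\<pi> (psum q r + psum p i + 1) \<le> \<pi> k"
      using that by (intro strict_mono_on_leD[OF strict_mono_on_right]) auto
    moreover have "\<pi> (psum q r + psum p i + 1) = psum q i + psum p i + 1"
      using lorenz_perm_right[where p = p, OF i1] by simp
    moreover have "psum q (i - 1) + u \<le> psum q i"
      using i psum_pred_add[of i q] by simp
    ultimately show ?thesis
      using lorenz_perm_left[where q = q, OF i] by simp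
  qed
  show ?thesis
  proof (rule Set.set_eqI)
    fix k
    show "k \<in> {k \<in> {psum q r<..n}. \<pi> k < \<pi> (psum q (i - 1) + u)} \<longleftrightarrow>
      k \<in> {psum q r<..psum q r + psum p i}"
    proof (cases "k \<le> psum q r + psum p i")
      case True
      then show ?thesis
        using before[of k] psum_mono[of i r p] i by (auto simp: n_eq)
    next
      case False
      then show ?thesis
        using after[of k] by (auto simp: n_eq)
    qed
  qed
qed

lemma left_strand_mem: "i \<in> {1..r} \<Longrightarrow> u \<in> {1..q i} \<Longrightarrow> psum q (i - 1) + u \<in> {1..psum q r}"
  using psum_block_mem[where p = q] .

lemma right_strand_mem:
  "i \<in> {1..r} \<Longrightarrow> u \<in> {1..p i} \<Longrightarrow> psum q r + psum p (i - 1) + u \<in> {psum q r<..n}"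
  using psum_block_mem[where p = p] by (fastforce simp: n_eq)

lemma p_col_mem:
  "j \<in> {1..r} \<Longrightarrow> v \<in> {1..p j} \<Longrightarrow> psum p (j - 1) + psum q (j - 1) + v \<in> {1..n}"
  using psum_block_mem[where p = p] psum_mono[of "j - 1" r q] by (fastforce simp: n_eq)

lemma q_col_mem:
  "j \<in> {1..r} \<Longrightarrow> v \<in> {1..q j} \<Longrightarrow> psum p j + psum q (j - 1) + v \<in> {1..n}"
  using psum_block_mem[where p = q] psum_mono[of j r p] by (fastforce simp: n_eq)

lemma perm_burau_q_row_p_col:
  assumes i: "i \<in> {1..r}" "u \<in> {1..q i}" and j: "j \<in> {1..r}" "v \<in> {1..p j}"
  shows "perm_burau n \<pi> $$ (psum q (i - 1) + u - 1, psum p (j - 1) + psum q (j - 1) + v - 1) =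
    (if j \<le> i then tt ^ psum p (j - 1) * ((1 - tt) * tt ^ (v - 1)) else 0)"
proof -
  define a b m where "a = psum q (i - 1) + u" and "b = psum p (j - 1) + psum q (j - 1) + v"
    and "m = psum q r + psum p (j - 1) + v"
  have a: "a \<in> {1..psum q r}" and m: "m \<in> {psum q r<..n}"
    unfolding a_def m_def using left_strand_mem[OF i] right_strand_mem[OF j] .
  have \<pi>a: "\<pi> a = psum p i + psum q (i - 1) + u" and \<pi>m: "\<pi> m = b"
    unfolding a_def b_def m_def using lorenz_perm_left[where q = q, OF i] lorenz_perm_right[where p = p, OF j] .
  have "perm_burau n \<pi> $$ (a - 1, b - 1) = perm_burau_entry n \<pi> a b"
    using a p_col_mem[OF j] by (intro perm_burau_index) (auto simp: b_def n_eq)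
  also have "\<dots> = (if b < \<pi> a then (1 - tt) * tt ^ right_below n \<pi> a b else 0)"
    using perm_burau_entry_preimage[OF inj, of a m] a m \<pi>m by (auto simp: n_eq)
  also have "\<dots> = (if j \<le> i then tt ^ psum p (j - 1) * ((1 - tt) * tt ^ (v - 1)) else 0)"
  proof (cases "j \<le> i")
    case True
    then have "psum p j \<le> psum p i" "psum q (j - 1) \<le> psum q (i - 1)"
      by (simp_all add: psum_mono)
    then have "b < \<pi> a"
      using \<pi>a i j psum_pred_add[of j p] by (simp add: b_def)
    moreover have "right_below n \<pi> a b = psum p (j - 1) + (v - 1)"
      using right_below_left_strand[OF a] right_strands_below_right_strand[OF m] \<open>b < \<pi> a\<close> \<pi>m j
      by (simp add: m_def)
    ultimately show ?thesis
      using True by (simp add: power_add algebra_simps)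
  next
    case False
    then have "psum p i \<le> psum p (j - 1)" "psum q i \<le> psum q (j - 1)"
      by (simp_all add: psum_mono)
    then have "\<not> b < \<pi> a"
      using \<pi>a i j psum_pred_add[of i q] by (simp add: b_def)
    then show ?thesis
      using False by simp
  qed
  finally show ?thesis
    unfolding a_def b_def .
qed

lemma perm_burau_q_row_q_col:
  assumes i: "i \<in> {1..r}" "u \<in> {1..q i}" and j: "j \<in> {1..r}" "v \<in> {1..q j}"
  shows "perm_burau n \<pi> $$ (psum q (i - 1) + u - 1, psum p j + psum q (j - 1) + v - 1) =
    (if j = i \<and> u = v then tt ^ psum p i else 0)"
proof -
  define a a' b where "a = psum q (i - 1) + u" and "a' = psum q (j - 1) + v"
    and "b = psum p j + psum q (j - 1) + v"
  have a: "a \<in> {1..psum q r}" and a': "a' \<in> {1..psum q r}"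
    unfolding a_def a'_def using left_strand_mem[OF i] left_strand_mem[OF j] .
  have \<pi>a': "\<pi> a' = b"
    unfolding a'_def b_def using lorenz_perm_left[where q = q, OF j] .
  have "perm_burau n \<pi> $$ (a - 1, b - 1) = perm_burau_entry n \<pi> a b"
    using a q_col_mem[OF j] by (intro perm_burau_index) (auto simp: b_def n_eq)
  also have "\<dots> = (if a = a' then tt ^ right_below n \<pi> a b else 0)"
    using perm_burau_entry_preimage[OF inj, of a a'] a a' \<pi>a'
      strict_mono_onD[OF strict_mono_on_lorenz_perm_left[where p = p] a a']
    by (auto simp: n_eq)
  also have "\<dots> = (if j = i \<and> u = v then tt ^ psum p i else 0)"
  proof (cases "j = i \<and> u = v")
    case True
    then have "a = a'"
      by (simp add: a_def a'_def)
    then have "right_below n \<pi> a b = psum p i"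
      using right_below_left_strand[OF a] right_strands_below_left_strand[OF i] \<pi>a'
      by (simp add: a_def)
    then show ?thesis
      using True \<open>a = a'\<close> by simp
  next
    case False
    then have "a \<noteq> a'"
      using psum_block_inj[of i j u q v] i j by (auto simp: a_def a'_def)
    then show ?thesis
      using False by auto
  qed
  finally show ?thesis
    unfolding a_def b_def .
qed

lemma perm_burau_p_row_p_col:
  assumes i: "i \<in> {1..r}" "u \<in> {1..p i}" and j: "j \<in> {1..r}" "v \<in> {1..p j}"
  shows "perm_burau n \<pi> $$ (psum q r + psum p (i - 1) + u - 1, psum p (j - 1) + psum q (j - 1) + v - 1) =
    (if j = i \<and> u = v then 1 else 0)"
proof -
  define a b m where "a = psum q r + psum p (i - 1) + u" and "b = psum p (j - 1) + psum q (j - 1) + v"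
    and "m = psum q r + psum p (j - 1) + v"
  have a: "a \<in> {psum q r<..n}" and m: "m \<in> {psum q r<..n}"
    unfolding a_def m_def using right_strand_mem[OF i] right_strand_mem[OF j] .
  have \<pi>m: "\<pi> m = b"
    unfolding b_def m_def using lorenz_perm_right[where p = p, OF j] .
  have "perm_burau n \<pi> $$ (a - 1, b - 1) = perm_burau_entry n \<pi> a b"
    using a p_col_mem[OF j] by (intro perm_burau_index) (auto simp: b_def)
  also have "\<dots> = (if a = m then tt ^ right_below n \<pi> a b else 0)"
    using perm_burau_entry_preimage[OF inj, of a m] a m \<pi>m
      strict_mono_onD[OF strict_mono_on_right a m]
    by auto
  also have "\<dots> = (if j = i \<and> u = v then 1 else 0)"
  proof (cases "j = i \<and> u = v")
    case True
    then have "a = m"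
      by (simp add: a_def m_def)
    have "\<pi> a < \<pi> k" if "k \<in> {1..n}" "a < k" for k
      using strict_mono_onD[OF strict_mono_on_right a _ that(2)] that a by auto
    then have "{k \<in> {1..n}. a < k \<and> \<pi> k < \<pi> a} = {}"
      by fastforce
    then have "right_below n \<pi> a b = 0"
      using \<open>a = m\<close> \<pi>m by (simp add: right_below_def)
    then show ?thesis
      using True \<open>a = m\<close> by simp
  next
    case False
    then have "a \<noteq> m"
      using psum_block_inj[of i j u p v] i j by (auto simp: a_def m_def)
    then show ?thesis
      using False by simp
  qed
  finally show ?thesis
    unfolding a_def b_def .
qed

lemma perm_burau_p_row_q_col:
  assumes i: "i \<in> {1..r}" "u \<in> {1..p i}" and j: "j \<in> {1..r}" "v \<in> {1..q j}"
  shows "perm_burau n \<pi> $$ (psum q r + psum p (i - 1) + u - 1, psum p j + psum q (j - 1) + v - 1) = 0"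
proof -
  define a a' b where "a = psum q r + psum p (i - 1) + u" and "a' = psum q (j - 1) + v"
    and "b = psum p j + psum q (j - 1) + v"
  have a: "a \<in> {psum q r<..n}" and a': "a' \<in> {1..psum q r}"
    unfolding a_def a'_def using right_strand_mem[OF i] left_strand_mem[OF j] .
  have \<pi>a': "\<pi> a' = b"
    unfolding a'_def b_def using lorenz_perm_left[where q = q, OF j] .
  have "perm_burau n \<pi> $$ (a - 1, b - 1) = perm_burau_entry n \<pi> a b"
    using a q_col_mem[OF j] by (intro perm_burau_index) (auto simp: b_def)
  also have "\<dots> = 0"
    using perm_burau_entry_preimage[OF inj, of a a'] a a' \<pi>a' by (auto simp: n_eq)
  finally show ?thesis
    unfolding a_def b_def .
qed

end

theorem theorem6p10:
  fixes p q :: "nat \<Rightarrow> nat" and r :: nat and w :: "nat list"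
  assumes "r \<ge> 1"
    and "\<forall>i\<in>{1..r}. 0 < p i \<and> 0 < q i"
    and "is_lorenz_word p q r w"
  defines "n \<equiv> psum p r + psum q r"
  shows "burau_word n w \<in> carrier_mat n n \<and>
    (\<forall>i\<in>{1..r}. \<forall>j\<in>{1..r}. \<forall>u\<in>{1..q i}. \<forall>v\<in>{1..p j}.
       burau_word n w $$ (psum q (i-1) + u - 1, psum p (j-1) + psum q (j-1) + v - 1)
         = (if j \<le> i then tt ^ psum p (j-1) * ((1 - tt) * tt ^ (v - 1)) else 0)) \<and>
    (\<forall>i\<in>{1..r}. \<forall>j\<in>{1..r}. \<forall>u\<in>{1..q i}. \<forall>v\<in>{1..q j}.
       burau_word n w $$ (psum q (i-1) + u - 1, psum p j + psum q (j-1) + v - 1)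
         = (if j = i \<and> u = v then tt ^ psum p i else 0)) \<and>
    (\<forall>i\<in>{1..r}. \<forall>j\<in>{1..r}. \<forall>u\<in>{1..p i}. \<forall>v\<in>{1..p j}.
       burau_word n w $$ (psum q r + psum p (i-1) + u - 1, psum p (j-1) + psum q (j-1) + v - 1)
         = (if j = i \<and> u = v then 1 else 0)) \<and>
    (\<forall>i\<in>{1..r}. \<forall>j\<in>{1..r}. \<forall>u\<in>{1..p i}. \<forall>v\<in>{1..q j}.
       burau_word n w $$ (psum q r + psum p (i-1) + u - 1, psum p j + psum q (j-1) + v - 1) = 0)"
proof -
  let ?L = "lorenz_perm p q r"
  have w: "\<forall>j\<in>set w. 1 \<le> j \<and> j < n" and agree: "\<And>k. k \<in> {1..n} \<Longrightarrow> word_perm w k = ?L k"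
    and len: "length w = card (inversions n ?L)"
    using assms(3) unfolding is_lorenz_word_def Let_def n_def[symmetric] inversions_def by auto
  have "burau_word n w = perm_burau n (word_perm w)"
    using burau_word_eq_perm_burau[OF w] len inversions_cong[OF agree] by simp
  also have "\<dots> = perm_burau n ?L"
    using perm_burau_cong[OF agree] .
  finally have burau: "burau_word n w = perm_burau n ?L" .
  have "inj_on (word_perm w) {1..n} \<longleftrightarrow> inj_on ?L {1..n}"
    by (rule inj_on_cong) (rule agree)
  then have "inj_on ?L {1..n}"
    using bij_betw_imp_inj_on[OF bij_betw_word_perm[OF w]] by simp
  then interpret lorenz_braid p q r n
    using assms(2) by unfold_locales (auto simp: n_def)
  show ?thesis
    unfolding burau
    by (intro conjI ballI perm_burau_carrier perm_burau_q_row_p_col perm_burau_q_row_q_col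
        perm_burau_p_row_p_col perm_burau_p_row_q_col)
qed

end
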